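(* For positive integers $a,c$ let $f^a_c(x,y,z)=ax^2+c(y^2+yz+z^2)$ with $x,y,z\in\mathbb{Z}$. There exist no positive integers $a,c$ such that $f^a_c$ represents every natural number.
   Context: Natural numbers are the positive integers $1,2,3,\dots$. *)

theory Defs
  imports Main
begin

definition f_form :: "int \<Rightarrow> int \<Rightarrow> int \<Rightarrow> int \<Rightarrow> int \<Rightarrow> int" where
  "f_form a c x y z = a * x^2 + c * (y^2 + y*z + z^2)"

end

theory Submission
  imports Defs
begin

text \<open>Since \<open>a, c \<ge> 1\<close>, a representation of \<open>n \<le> 10\<close> needs \<open>x\<^sup>2 \<le> 10\<close> and
  \<open>y\<^sup>2 + y z + z\<^sup>2 \<le> 10\<close>, so \<open>n = a X + c Q\<close> with \<open>X \<in> {0,1,4,9}\<close> and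
  \<open>Q \<in> {0,1,3,4,7,9}\<close>. Representing 1 and 2 forces \<open>(a, c)\<close> to be \<open>(1,1)\<close>, \<open>(1,2)\<close>
  or \<open>(2,1)\<close>, and these miss 6, 5 and 10 respectively.\<close>

lemma eisenstein_norm_times_4:
  fixes y z :: int
  shows "4 * (y\<^sup>2 + y*z + z\<^sup>2) = (2*y + z)\<^sup>2 + 3 * z\<^sup>2"
  by algebra

lemma eisenstein_norm_nonneg:
  fixes y z :: int
  shows "0 \<le> y\<^sup>2 + y*z + z\<^sup>2"
proof -
  have "0 \<le> 4 * (y\<^sup>2 + y*z + z\<^sup>2)" unfolding eisenstein_norm_times_4 by simp
  then show ?thesis by simp
qed

lemma int_cases_of_square_le_15:
  fixes x :: int
  assumes "x\<^sup>2 \<le> 15"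
  shows "x \<in> {-3, -2, -1, 0, 1, 2, 3}"
proof -
  have "\<not> x\<^sup>2 \<ge> 4\<^sup>2" using assms by simp
  then have "\<bar>x\<bar> \<le> 3" using abs_le_square_iff[of 4 x] by simp
  then have "x \<in> {-3..3}" by auto
  also have "{-3..3} = {-3, -2, -1, 0, 1, 2, (3::int)}" by auto
  finally show ?thesis .
qed

lemma int_square_le_10_cases:
  fixes x :: int
  assumes "x\<^sup>2 \<le> 10"
  shows "x\<^sup>2 \<in> {0, 1, 4, 9}"
proof -
  have "x \<in> {-3, -2, -1, 0, 1, 2, 3}" using assms int_cases_of_square_le_15 by simp
  then show ?thesis by (auto simp: power2_eq_square)
qed

lemma eisenstein_norm_le_10_cases:
  fixes y z :: int
  assumes "y\<^sup>2 + y*z + z\<^sup>2 \<le> 10"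
  shows "y\<^sup>2 + y*z + z\<^sup>2 \<in> {0, 1, 3, 4, 7, 9}"
proof -
  have "3 * z\<^sup>2 \<le> 4 * (y\<^sup>2 + y*z + z\<^sup>2)" "3 * y\<^sup>2 \<le> 4 * (z\<^sup>2 + z*y + y\<^sup>2)"
    unfolding eisenstein_norm_times_4 by simp_all
  then have "z\<^sup>2 \<le> 15" "y\<^sup>2 \<le> 15" using assms by (simp_all add: algebra_simps)
  then have "y \<in> {-3, -2, -1, 0, 1, 2, 3}" "z \<in> {-3, -2, -1, 0, 1, 2, 3}"
    using int_cases_of_square_le_15 by blast+
  then show ?thesis using assms by (auto simp: power2_eq_square)
qed

lemma f_form_value_le_10:
  fixes a c x y z :: int
  assumes "a > 0" "c > 0" "f_form a c x y z \<le> 10"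
  shows "\<exists>X \<in> {0, 1, 4, 9}. \<exists>Q \<in> {0, 1, 3, 4, 7, 9}. f_form a c x y z = a*X + c*Q"
proof -
  let ?Q = "y\<^sup>2 + y*z + z\<^sup>2"
  have "x\<^sup>2 \<le> a * x\<^sup>2" "?Q \<le> c * ?Q" "0 \<le> a * x\<^sup>2" "0 \<le> c * ?Q"
    using assms(1,2) eisenstein_norm_nonneg[of y z] by (simp_all add: mult_le_cancel_right1)
  then have "x\<^sup>2 \<le> 10" "?Q \<le> 10" using assms(3) unfolding f_form_def by linarith+
  then show ?thesis
    using int_square_le_10_cases eisenstein_norm_le_10_cases unfolding f_form_def by blast
qed

theorem theorem3p9:
  shows "\<not> (\<exists>a c :: int. a > 0 \<and> c > 0 \<and>
           (\<forall>n :: int. n \<ge> 1 \<longrightarrow> (\<exists>x y z :: int. f_form a c x y z = n)))"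
proof
  assume "\<exists>a c :: int. a > 0 \<and> c > 0 \<and>
           (\<forall>n :: int. n \<ge> 1 \<longrightarrow> (\<exists>x y z :: int. f_form a c x y z = n))"
  then obtain a c :: int where a: "a > 0" and c: "c > 0"
    and universal: "\<And>n. n \<ge> 1 \<Longrightarrow> \<exists>x y z. f_form a c x y z = n" by blast
  have small: "\<exists>X \<in> {0, 1, 4, 9}. \<exists>Q \<in> {0, 1, 3, 4, 7, 9}. n = a*X + c*Q"
    if "1 \<le> n" "n \<le> 10" for n
    using universal[OF \<open>1 \<le> n\<close>] f_form_value_le_10[OF a c] \<open>n \<le> 10\<close> by metis
  have "a = 1 \<or> c = 1" using small[of 1] a c by auto
  then have "(a = 1 \<and> c = 1) \<or> (a = 1 \<and> c = 2) \<or> (a = 2 \<and> c = 1)"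
    using small[of 2] a c by auto
  moreover have False if "a = 1" "c = 1" using small[of 6] that by auto
  moreover have False if "a = 1" "c = 2" using small[of 5] that by auto
  moreover have False if "a = 2" "c = 1" using small[of 10] that by auto
  ultimately show False by blast
qed

end
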